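(* Let $n,k\in\mathbb{N}$ with $n\le k$, and let $a_1,\ldots,a_n\ge 0$ be real numbers such that $r:=\sum_{j=1}^n a_j>0$. Consider the (possibly degenerate) ellipsoid $$\mathcal{E}=\Big\{x=(x_1,\ldots,x_n)^t\in\mathbb{R}^n \;\Big|\; \sum_{j=1}^n a_j x_j^2=1\Big\}.$$ Then there is a tight frame for $\mathbb{R}^n$ consisting of $k$ vectors $u_1,\ldots,u_k\in\mathcal{E}$.
   Context: A finite sequence $\{u_j\}$ in a Hilbert space $\mathcal{H}$ is a frame if there are constants $0<A\le B$ with $A\|x\|^2\le\sum_j|\langle x,u_j\rangle|^2\le B\|x\|^2$ for all $x\in\mathcal{H}$; it is a tight frame if one can take $A=B$ (the common value is the frame bound). *)

theory Defs
  imports "HOL-Analysis.Analysis"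
begin

definition is_frame :: "nat \<Rightarrow> (nat \<Rightarrow> 'a::real_inner) \<Rightarrow> bool" where
  "is_frame k u \<longleftrightarrow> (\<exists>A B. 0 < A \<and> A \<le> B \<and>
     (\<forall>x. A * (norm x)^2 \<le> (\<Sum>j<k. \<bar>inner x (u j)\<bar>^2) \<and>
          (\<Sum>j<k. \<bar>inner x (u j)\<bar>^2) \<le> B * (norm x)^2))"

definition is_tight_frame :: "nat \<Rightarrow> (nat \<Rightarrow> 'a::real_inner) \<Rightarrow> bool" where
  "is_tight_frame k u \<longleftrightarrow> (\<exists>A. 0 < A \<and>
     (\<forall>x. A * (norm x)^2 \<le> (\<Sum>j<k. \<bar>inner x (u j)\<bar>^2) \<and>
          (\<Sum>j<k. \<bar>inner x (u j)\<bar>^2) \<le> A * (norm x)^2))"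

definition ellipsoid :: "real^'n \<Rightarrow> (real^'n) set" where
  "ellipsoid a = {x. (\<Sum>j\<in>UNIV. a $ j * (x $ j)^2) = 1}"

end

theory Submission
  imports Defs
begin

text \<open>Start from the orthogonal frame given by the coordinate axes scaled by \<open>sqrt (k / r)\<close>
  and padded with zero vectors: it is tight with bound \<open>k / r\<close>, and the values of the quadratic
  form \<open>Q x = \<Sum>j. a\<^sub>j x\<^sub>j\<^sup>2\<close> on its \<open>k\<close> vectors average to \<open>1\<close>. Rotating two vectors of a family
  within the plane they span changes neither its frame operator nor the sum of its \<open>Q\<close>-values.
  As long as some vector has \<open>Q \<noteq> 1\<close>, there are vectors with \<open>Q < 1\<close> and \<open>Q > 1\<close>, and by the
  intermediate value theorem a rotation of this pair moves the second one onto the ellipsoid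
  without moving any other vector. Each step puts one more vector on the ellipsoid.\<close>

definition diag_quadratic_form :: "real^'n \<Rightarrow> real^'n \<Rightarrow> real" where
  "diag_quadratic_form a x = (\<Sum>j\<in>UNIV. a $ j * (x $ j)^2)"

lemma ellipsoid_eq: "ellipsoid a = {x. diag_quadratic_form a x = 1}"
  by (simp add: ellipsoid_def diag_quadratic_form_def)

lemma diag_quadratic_form_scaleR:
  "diag_quadratic_form a (c *\<^sub>R x) = c^2 * diag_quadratic_form a x"
  by (simp add: diag_quadratic_form_def sum_distrib_left power_mult_distrib algebra_simps)

lemma diag_quadratic_form_axis: "diag_quadratic_form a (axis i 1) = a $ i"
proof -
  have "diag_quadratic_form a (axis i 1) = (\<Sum>j\<in>UNIV. if j = i then a $ i else 0)"
    unfolding diag_quadratic_form_def by (intro sum.cong) (auto simp: axis_def)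
  then show ?thesis by simp
qed

lemma continuous_on_diag_quadratic_form: "continuous_on UNIV (diag_quadratic_form a)"
  unfolding diag_quadratic_form_def by (intro continuous_intros)

lemma power2_norm_vec_eq_sum: "(norm x)^2 = (\<Sum>i\<in>UNIV. (x $ i)^2)" for x :: "real^'n"
  unfolding dot_square_norm[symmetric] inner_vec_def by (simp add: power2_eq_square)

definition pair_rotation_invariant :: "('a::real_vector \<Rightarrow> real) \<Rightarrow> bool" where
  "pair_rotation_invariant h \<longleftrightarrow>
     (\<forall>c s x y. c^2 + s^2 = 1 \<longrightarrow> h (c *\<^sub>R x + s *\<^sub>R y) + h ((- s) *\<^sub>R x + c *\<^sub>R y) = h x + h y)"

lemma pair_rotation_invariant_inner_square: "pair_rotation_invariant (\<lambda>w. (inner x w)^2)"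
  unfolding pair_rotation_invariant_def
proof (intro allI impI)
  fix c s :: real and u v
  assume "c^2 + s^2 = 1"
  moreover have "(inner x (c *\<^sub>R u + s *\<^sub>R v))^2 + (inner x ((- s) *\<^sub>R u + c *\<^sub>R v))^2
      = (c^2 + s^2) * ((inner x u)^2 + (inner x v)^2)"
    by (simp add: inner_add_right power2_eq_square algebra_simps)
  ultimately show "(inner x (c *\<^sub>R u + s *\<^sub>R v))^2 + (inner x ((- s) *\<^sub>R u + c *\<^sub>R v))^2
      = (inner x u)^2 + (inner x v)^2"
    by simp
qed

lemma pair_rotation_invariant_diag_quadratic_form:
  "pair_rotation_invariant (diag_quadratic_form a)"
proof -
  have "a $ j * (c * u $ j + s * v $ j)^2 + a $ j * (- s * u $ j + c * v $ j)^2
      = (c^2 + s^2) * (a $ j * (u $ j)^2 + a $ j * (v $ j)^2)" for c s u v j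
    by (simp add: algebra_simps power2_eq_square)
  then show ?thesis
    by (simp add: pair_rotation_invariant_def diag_quadratic_form_def sum.distrib[symmetric])
qed

definition rotate_pair :: "nat \<Rightarrow> nat \<Rightarrow> real \<Rightarrow> (nat \<Rightarrow> 'a::real_vector) \<Rightarrow> nat \<Rightarrow> 'a" where
  "rotate_pair p q t u =
     u(p := cos t *\<^sub>R u p + sin t *\<^sub>R u q, q := (- sin t) *\<^sub>R u p + cos t *\<^sub>R u q)"

lemma sum_rotate_pair:
  assumes "pair_rotation_invariant h" "finite A" "p \<in> A" "q \<in> A" "p \<noteq> q"
  shows "(\<Sum>j\<in>A. h (rotate_pair p q t u j)) = (\<Sum>j\<in>A. h (u j))"
proof -
  have split: "sum f A = f p + f q + sum f (A - {p} - {q})" for f :: "nat \<Rightarrow> real"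
    using assms(2-5) by (simp add: sum.remove[of A p] sum.remove[of "A - {p}" q])
  have "h (rotate_pair p q t u p) + h (rotate_pair p q t u q) = h (u p) + h (u q)"
    using assms(1,5) by (simp add: rotate_pair_def pair_rotation_invariant_def)
  moreover have "rotate_pair p q t u j = u j" if "j \<in> A - {p} - {q}" for j
    using that by (simp add: rotate_pair_def)
  ultimately show ?thesis
    using split[of "\<lambda>j. h (rotate_pair p q t u j)"] split[of "\<lambda>j. h (u j)"] by simp
qed

lemma exists_below_above_mean:
  fixes f :: "'i \<Rightarrow> real"
  assumes "finite A" "sum f A = real (card A) * c" "i \<in> A" "f i \<noteq> c"
  shows "\<exists>p\<in>A. \<exists>q\<in>A. f q < c \<and> c < f p"
proof (rule ccontr)
  assume none: "\<not> ?thesis"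
  have "sum f A < sum (\<lambda>_. c) A" if "f i < c"
    using none that assms(1,3) by (intro sum_strict_mono_ex1) force+
  moreover have "sum (\<lambda>_. c) A < sum f A" if "c < f i"
    using none that assms(1,3) by (intro sum_strict_mono_ex1) force+
  ultimately show False
    using assms(2,4) by (simp add: mult.commute) linarith
qed

lemma rotation_attains_level:
  fixes Q :: "'a::real_normed_vector \<Rightarrow> real"
  assumes "continuous_on UNIV Q" "Q y \<le> c" "c \<le> Q x"
  shows "\<exists>t. Q (cos t *\<^sub>R x + sin t *\<^sub>R y) = c"
proof -
  have "continuous_on {0..pi/2} (\<lambda>t. Q (cos t *\<^sub>R x + sin t *\<^sub>R y))"
    by (intro continuous_on_compose2[OF assms(1)] continuous_intros) auto
  then show ?thesis
    using IVT2'[of "\<lambda>t. Q (cos t *\<^sub>R x + sin t *\<^sub>R y)" "pi/2" c 0] assms(2,3) by auto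
qed

lemma balance_by_pair_rotations:
  fixes Q :: "'a::real_normed_vector \<Rightarrow> real" and u :: "nat \<Rightarrow> 'a"
  assumes Q: "continuous_on UNIV Q" "pair_rotation_invariant Q"
    and mean: "(\<Sum>j<k. Q (u j)) = real k * c"
  shows "\<exists>v. (\<forall>j<k. Q (v j) = c) \<and>
           (\<forall>h. pair_rotation_invariant h \<longrightarrow> (\<Sum>j<k. h (v j)) = (\<Sum>j<k. h (u j)))"
  using mean
proof (induction "card {j. j < k \<and> Q (u j) \<noteq> c}" arbitrary: u rule: less_induct)
  case less
  show ?case
  proof (cases "\<forall>j<k. Q (u j) = c")
    case True
    then show ?thesis by blast
  next
    case False
    then obtain i where "i < k" "Q (u i) \<noteq> c" by auto
    then obtain p q where pq: "p < k" "q < k" "Q (u q) < c" "c < Q (u p)"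
      using exists_below_above_mean[of "{..<k}" "\<lambda>j. Q (u j)" c i] less.prems by auto
    then have "p \<noteq> q" by auto
    obtain t where t: "Q (cos t *\<^sub>R u p + sin t *\<^sub>R u q) = c"
      using rotation_attains_level[OF Q(1)] pq(3,4) by fastforce
    define w where "w = rotate_pair p q t u"
    have w_sums: "(\<Sum>j<k. h (w j)) = (\<Sum>j<k. h (u j))" if "pair_rotation_invariant h" for h
      unfolding w_def using that pq(1,2) \<open>p \<noteq> q\<close> by (intro sum_rotate_pair) auto
    \<comment> \<open>Only \<open>p\<close> and \<open>q\<close> move: \<open>p\<close> lands on level \<open>c\<close>, and \<open>q\<close> was off it already.\<close>
    let ?bad = "\<lambda>u. {j. j < k \<and> Q (u j) \<noteq> c}"
    have "?bad w \<subseteq> ?bad u - {p}"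
      using t pq(3) \<open>p \<noteq> q\<close> by (auto simp: w_def rotate_pair_def)
    then have "card (?bad w) \<le> card (?bad u - {p})"
      by (intro card_mono) auto
    also have "\<dots> < card (?bad u)"
      using pq(1,4) by (intro card_Diff1_less) auto
    finally have "card (?bad w) < card (?bad u)" .
    moreover have "(\<Sum>j<k. Q (w j)) = real k * c"
      using w_sums[OF Q(2)] less.prems by simp
    ultimately obtain v where "\<forall>j<k. Q (v j) = c"
      "\<forall>h. pair_rotation_invariant h \<longrightarrow> (\<Sum>j<k. h (v j)) = (\<Sum>j<k. h (w j))"
      using less.hyps by blast
    then show ?thesis using w_sums by auto
  qed
qed

lemma obtain_padded_axes:
  assumes "CARD('n::finite) \<le> k"
  obtains b :: "nat \<Rightarrow> real^'n"
  where "\<And>h :: real^'n \<Rightarrow> real. h 0 = 0 \<Longrightarrow> (\<Sum>j<k. h (b j)) = (\<Sum>i\<in>UNIV. h (axis i 1))"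
proof -
  obtain e where e: "bij_betw e {..<CARD('n)} (UNIV :: 'n set)"
    using ex_bij_betw_nat_finite[of "UNIV :: 'n set"] by (auto simp: lessThan_atLeast0)
  define b where "b j = (if j < CARD('n) then axis (e j) (1::real) else 0)" for j
  have sums: "(\<Sum>j<k. h (b j)) = (\<Sum>i\<in>UNIV. h (axis i 1))" if "h 0 = 0" for h :: "real^'n \<Rightarrow> real"
  proof -
    have "(\<Sum>j<k. h (b j)) = (\<Sum>j<CARD('n). h (b j))"
      using assms that by (intro sum.mono_neutral_right) (auto simp: b_def)
    also have "\<dots> = (\<Sum>j<CARD('n). h (axis (e j) 1))"
      by (intro sum.cong) (simp_all add: b_def)
    also have "\<dots> = (\<Sum>i\<in>UNIV. h (axis i 1))"
      by (rule sum.reindex_bij_betw[OF e])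
    finally show ?thesis .
  qed
  show thesis by (rule that) (rule sums)
qed

theorem theorem1:
  fixes a :: "real^'n" and k :: nat
  assumes "CARD('n) \<le> k"
    and "\<forall>j. a $ j \<ge> 0"
    and "(\<Sum>j\<in>UNIV. a $ j) > 0"
  shows "\<exists>u :: nat \<Rightarrow> real^'n. (\<forall>j<k. u j \<in> ellipsoid a) \<and> is_tight_frame k u"
proof -
  define C where "C = real k / (\<Sum>j\<in>UNIV. a $ j)"
  have "0 < CARD('n)" by simp
  then have "0 < k" using assms(1) by linarith
  then have C: "0 < C" using assms(3) by (simp add: C_def)
  obtain b :: "nat \<Rightarrow> real^'n"
    where b: "\<And>h :: real^'n \<Rightarrow> real. h 0 = 0 \<Longrightarrow> (\<Sum>j<k. h (b j)) = (\<Sum>i\<in>UNIV. h (axis i 1))"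
    using obtain_padded_axes[OF assms(1)] by blast
  have frame: "(\<Sum>j<k. (inner x (sqrt C *\<^sub>R b j))^2) = C * (norm x)^2" for x
    using b[of "\<lambda>w. (inner x (sqrt C *\<^sub>R w))^2"] C
    by (simp add: inner_axis power_mult_distrib power2_norm_vec_eq_sum sum_distrib_left)
  have "(\<Sum>j<k. diag_quadratic_form a (sqrt C *\<^sub>R b j))
      = (\<Sum>i\<in>UNIV. diag_quadratic_form a (sqrt C *\<^sub>R axis i 1))"
    by (rule b) (simp add: diag_quadratic_form_def)
  also have "\<dots> = C * (\<Sum>i\<in>UNIV. a $ i)"
    using C by (simp add: diag_quadratic_form_scaleR diag_quadratic_form_axis sum_distrib_left)
  also have "\<dots> = real k * 1"
    using assms(3) by (simp add: C_def)
  finally have "(\<Sum>j<k. diag_quadratic_form a (sqrt C *\<^sub>R b j)) = real k * 1" .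
  from balance_by_pair_rotations[OF continuous_on_diag_quadratic_form
      pair_rotation_invariant_diag_quadratic_form this]
  obtain v where on_ellipsoid: "\<forall>j<k. diag_quadratic_form a (v j) = 1"
    and invariant: "\<forall>h. pair_rotation_invariant h \<longrightarrow>
                      (\<Sum>j<k. h (v j)) = (\<Sum>j<k. h (sqrt C *\<^sub>R b j))"
    by blast
  have "(\<Sum>j<k. (inner x (v j))^2) = C * (norm x)^2" for x
    using invariant[rule_format, OF pair_rotation_invariant_inner_square] frame by simp
  then show ?thesis
    using C on_ellipsoid unfolding is_tight_frame_def ellipsoid_eq by (intro exI[of _ v]) auto
qed

end
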